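(* Let $L$ spin-orbitals be indexed by $\{1,\dots,L\}$, let $1\le N_{\mathrm{occ}}<L$, and let $\Psi_0$ be the Fermi vacuum, i.e. the Slater determinant in which spin-orbitals $1,\dots,N_{\mathrm{occ}}$ are occupied and the others empty. Let $\hat C$ be a chain (product in a fixed order) of $n$ excitation operators $\hat E^a_i=\hat a^\dagger_a\hat a_i$ and $n$ deexcitation operators $\hat D^i_a=\hat a^\dagger_i\hat a_a$ ($i\le N_{\mathrm{occ}}<a$), and let $S$ be the word obtained by replacing, from left to right, each deexcitation operator by "(" and each excitation operator by ")". Let $N\ge1$, $K\in\{0,\dots,2n\}$, and let $\hat C^N_K$ be the chain obtained by inserting, immediately after the $K$-th (de)excitation operator of $\hat C$, the product $\hat a^\dagger_{r_1}\cdots\hat a^\dagger_{r_N}\hat a_{s_1}\cdots\hat a_{s_N}$ with arbitrary $r_1,\dots,r_N,s_1,\dots,s_N\in\{1,\dots,L\}$. If $S$ is not a Dyck word, then $\langle\Psi_0|\hat C^N_K|\Psi_0\rangle=0$.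
   Context: A Dyck word is a finite word over $\{(,)\}$ with as many opening as closing brackets, every prefix of which contains at least as many opening as closing brackets. *)

theory Defs
  imports Complex_Main
begin

(* Fermionic Fock space over spin-orbitals (natural numbers, in use {1..L}).
   Occupation-number basis vectors |T> are indexed by finite sets T of occupied
   orbitals; a ket is its coefficient function  nat set => real.
   Sign convention (Jordan-Wigner order):
     a^dag_p |S> = (-1)^#{q in S. q < p} |S u {p}>   (p not in S), else 0
     a_p     |S> = (-1)^#{q in S. q < p} |S - {p}>   (p in S),     else 0  *)

type_synonym ket = "nat set \<Rightarrow> real"

definition fsign :: "nat \<Rightarrow> nat set \<Rightarrow> real" where
  "fsign p T = (-1) ^ card {q \<in> T. q < p}"

definition cre :: "nat \<Rightarrow> ket \<Rightarrow> ket" where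
  "cre p v = (\<lambda>T. if p \<in> T then fsign p (T - {p}) * v (T - {p}) else 0)"

definition ann :: "nat \<Rightarrow> ket \<Rightarrow> ket" where
  "ann p v = (\<lambda>T. if p \<notin> T then fsign p T * v (insert p T) else 0)"

datatype ladder = Cre nat | Ann nat

fun ladder_op :: "ladder \<Rightarrow> ket \<Rightarrow> ket" where
  "ladder_op (Cre p) = cre p"
| "ladder_op (Ann p) = ann p"

definition prod_op :: "ladder list \<Rightarrow> ket \<Rightarrow> ket" where
  "prod_op os v = foldr ladder_op os v"

definition basis :: "nat set \<Rightarrow> ket" where
  "basis S = (\<lambda>T. if T = S then 1 else 0)"

definition fermi_vac :: "nat \<Rightarrow> nat set" where
  "fermi_vac Nocc = {1..Nocc}"

definition vac_expect :: "nat \<Rightarrow> ladder list \<Rightarrow> real" where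
  "vac_expect Nocc os = prod_op os (basis (fermi_vac Nocc)) (fermi_vac Nocc)"

(* (de)excitation operators: Exc i a = E^a_i = a^dag_a a_i,  Dex i a = D^i_a = a^dag_i a_a *)
datatype exop = Exc nat nat | Dex nat nat

fun exop_ladders :: "exop \<Rightarrow> ladder list" where
  "exop_ladders (Exc i a) = [Cre a, Ann i]"
| "exop_ladders (Dex i a) = [Cre i, Ann a]"

fun exop_valid :: "nat \<Rightarrow> nat \<Rightarrow> exop \<Rightarrow> bool" where
  "exop_valid L Nocc (Exc i a) = (1 \<le> i \<and> i \<le> Nocc \<and> Nocc < a \<and> a \<le> L)"
| "exop_valid L Nocc (Dex i a) = (1 \<le> i \<and> i \<le> Nocc \<and> Nocc < a \<and> a \<le> L)"

fun is_exc :: "exop \<Rightarrow> bool" where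
  "is_exc (Exc i a) = True"
| "is_exc (Dex i a) = False"

(* brackets: True = "(" , False = ")" *)
fun bracket_of :: "exop \<Rightarrow> bool" where
  "bracket_of (Dex i a) = True"
| "bracket_of (Exc i a) = False"

definition n_open :: "bool list \<Rightarrow> nat" where
  "n_open w = length (filter (\<lambda>b. b) w)"

definition n_close :: "bool list \<Rightarrow> nat" where
  "n_close w = length (filter (\<lambda>b. \<not> b) w)"

definition dyck_word :: "bool list \<Rightarrow> bool" where
  "dyck_word w \<longleftrightarrow> n_open w = n_close w \<and>
     (\<forall>k \<le> length w. n_close (take k w) \<le> n_open (take k w))"

definition inserted_chain :: "exop list \<Rightarrow> nat \<Rightarrow> nat list \<Rightarrow> nat list \<Rightarrow> ladder list" where
  "inserted_chain C K rs ss =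
     concat (map exop_ladders (take K C)) @ map Cre rs @ map Ann ss @
     concat (map exop_ladders (drop K C))"

end

theory Submission
  imports Defs
begin

text \<open>A creation or annihilation operator changes the number of occupied virtual orbitals
  (those above the Fermi level) of a determinant by a fixed amount: \<open>\<plusminus>1\<close> on a virtual
  orbital, \<open>0\<close> on an occupied one. Hence a product of ladder operators only connects
  determinants whose virtual counts differ by its total shift. Splitting the chain into a prefix
  acting on the bra and a suffix acting on the ket, a nonzero vacuum expectation value forces every
  prefix to have non-positive and every suffix non-negative shift, since the count is never
  negative and vanishes on the vacuum. An excitation shifts by \<open>+1\<close> and a deexcitation by
  \<open>-1\<close>, so a balanced bracket word that is not Dyck has a prefix of positive shift whose
  complementary suffix has negative shift, and the inserted product lies after that prefix or
  before that suffix.\<close>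

definition n_virtual :: "nat \<Rightarrow> nat set \<Rightarrow> nat" where
  "n_virtual Nocc T = card {q \<in> T. Nocc < q}"

fun virtual_shift :: "nat \<Rightarrow> ladder \<Rightarrow> int" where
  "virtual_shift Nocc (Cre p) = (if Nocc < p then 1 else 0)"
| "virtual_shift Nocc (Ann p) = (if Nocc < p then -1 else 0)"

definition chain_shift :: "nat \<Rightarrow> ladder list \<Rightarrow> int" where
  "chain_shift Nocc os = sum_list (map (virtual_shift Nocc) os)"

lemma chain_shift_append [simp]:
  "chain_shift Nocc (xs @ ys) = chain_shift Nocc xs + chain_shift Nocc ys"
  by (simp add: chain_shift_def)

lemma prod_op_append: "prod_op (xs @ ys) v = prod_op xs (prod_op ys v)"
  by (simp add: prod_op_def)

lemma n_virtual_insert: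
  assumes "finite T" and "p \<notin> T"
  shows "int (n_virtual Nocc (insert p T)) = int (n_virtual Nocc T) + (if Nocc < p then 1 else 0)"
proof -
  have "{q \<in> insert p T. Nocc < q} = (if Nocc < p then insert p {q \<in> T. Nocc < q} else {q \<in> T. Nocc < q})"
    by auto
  then show ?thesis
    using assms by (simp add: n_virtual_def)
qed

lemma ladder_op_support:
  assumes "ladder_op l v T \<noteq> 0"
  obtains T' where "v T' \<noteq> 0" and "finite T' \<longleftrightarrow> finite T"
    and "finite T \<Longrightarrow> int (n_virtual Nocc T) = int (n_virtual Nocc T') + virtual_shift Nocc l"
proof (cases l)
  case (Cre p)
  with assms have "p \<in> T" and "v (T - {p}) \<noteq> 0"
    by (auto simp: cre_def split: if_splits)
  moreover have "finite T \<Longrightarrow> int (n_virtual Nocc T) = int (n_virtual Nocc (T - {p})) + virtual_shift Nocc l"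
    using n_virtual_insert[of "T - {p}" p Nocc] \<open>p \<in> T\<close> Cre by (simp add: insert_absorb)
  ultimately show ?thesis
    using that by simp
next
  case (Ann p)
  with assms have "p \<notin> T" and "v (insert p T) \<noteq> 0"
    by (auto simp: ann_def split: if_splits)
  moreover have "finite T \<Longrightarrow> int (n_virtual Nocc (insert p T)) + virtual_shift Nocc l = int (n_virtual Nocc T)"
    using n_virtual_insert[of T p Nocc] \<open>p \<notin> T\<close> Ann by simp
  ultimately show ?thesis
    using that[of "insert p T"] by simp
qed

lemma prod_op_support:
  assumes "prod_op os v T \<noteq> 0"
  shows "\<exists>T'. v T' \<noteq> 0 \<and> (finite T' \<longleftrightarrow> finite T) \<and>
    (finite T \<longrightarrow> int (n_virtual Nocc T) = int (n_virtual Nocc T') + chain_shift Nocc os)"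
  using assms
proof (induction os arbitrary: T)
  case Nil
  then show ?case by (auto simp: prod_op_def chain_shift_def)
next
  case (Cons l os)
  then have "ladder_op l (prod_op os v) T \<noteq> 0"
    by (simp add: prod_op_def)
  then obtain T1 where "prod_op os v T1 \<noteq> 0" and "finite T1 \<longleftrightarrow> finite T"
    and "finite T \<Longrightarrow> int (n_virtual Nocc T) = int (n_virtual Nocc T1) + virtual_shift Nocc l"
    by (rule ladder_op_support[where Nocc = Nocc]) blast
  with Cons.IH show ?case
    by (fastforce simp: chain_shift_def)
qed

lemma vac_expect_nonzero_shifts:
  assumes "vac_expect Nocc (xs @ ys) \<noteq> 0"
  shows "chain_shift Nocc xs \<le> 0" and "0 \<le> chain_shift Nocc ys"
proof -
  let ?S0 = "fermi_vac Nocc"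
  have vac: "finite ?S0" "n_virtual Nocc ?S0 = 0"
    by (auto simp: fermi_vac_def n_virtual_def)
  from assms have "prod_op xs (prod_op ys (basis ?S0)) ?S0 \<noteq> 0"
    by (simp add: vac_expect_def prod_op_append)
  from prod_op_support[OF this, where Nocc = Nocc] vac
  obtain T where "prod_op ys (basis ?S0) T \<noteq> 0" and "finite T"
    and xs_shift: "0 = int (n_virtual Nocc T) + chain_shift Nocc xs"
    by auto
  from prod_op_support[OF this(1), where Nocc = Nocc] \<open>finite T\<close> obtain T' where "basis ?S0 T' \<noteq> 0"
    and "int (n_virtual Nocc T) = int (n_virtual Nocc T') + chain_shift Nocc ys"
    by blast
  then have "int (n_virtual Nocc T) = chain_shift Nocc ys"
    using vac by (simp add: basis_def split: if_splits)
  with xs_shift show "chain_shift Nocc xs \<le> 0" and "0 \<le> chain_shift Nocc ys"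
    by linarith+
qed

lemma bracket_of_eq_not_is_exc: "bracket_of e \<longleftrightarrow> \<not> is_exc e"
  by (cases e) simp_all

lemma chain_shift_exops:
  assumes "\<forall>e \<in> set U. exop_valid L Nocc e"
  shows "chain_shift Nocc (concat (map exop_ladders U)) =
    int (n_close (map bracket_of U)) - int (n_open (map bracket_of U))"
  using assms
proof (induction U)
  case Nil
  then show ?case by (simp add: chain_shift_def n_open_def n_close_def)
next
  case (Cons e U)
  then show ?case
    by (cases e) (auto simp: chain_shift_def n_open_def n_close_def)
qed

lemma balanced_not_dyck_prefix:
  assumes "n_open w = n_close w" and "\<not> dyck_word w"
  obtains k where "n_open (take k w) < n_close (take k w)"
    and "n_close (drop k w) < n_open (drop k w)"
proof -
  from assms obtain k where k: "n_open (take k w) < n_close (take k w)"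
    unfolding dyck_word_def by (auto simp: not_le)
  have "n_open w = n_open (take k w) + n_open (drop k w)"
    and "n_close w = n_close (take k w) + n_close (drop k w)"
    by (metis append_take_drop_id filter_append length_append n_open_def n_close_def)+
  with assms(1) k show ?thesis
    using that by simp
qed

lemma inserted_chain_prefix:
  assumes "k \<le> K"
  shows "\<exists>zs. inserted_chain C K rs ss = concat (map exop_ladders (take k C)) @ zs"
proof -
  have "take K C = take k C @ take (K - k) (drop k C)"
    using take_add[of k "K - k" C] assms by simp
  then show ?thesis
    by (simp add: inserted_chain_def)
qed

lemma inserted_chain_suffix:
  assumes "K \<le> k"
  shows "\<exists>zs. inserted_chain C K rs ss = zs @ concat (map exop_ladders (drop k C))"
proof -
  have "drop K C = take (k - K) (drop K C) @ drop k C"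
    using append_take_drop_id[of "k - K" "drop K C"] assms by simp
  then show ?thesis
    unfolding inserted_chain_def by (metis append.assoc concat_append map_append)
qed

theorem lemma1:
  fixes L Nocc n N K :: nat and C :: "exop list" and rs ss :: "nat list"
  assumes "1 \<le> Nocc" and "Nocc < L"
    and "\<forall>e \<in> set C. exop_valid L Nocc e"
    and "length (filter is_exc C) = n" and "length (filter (\<lambda>e. \<not> is_exc e) C) = n"
    and "1 \<le> N" and "K \<le> 2 * n"
    and "length rs = N" and "length ss = N"
    and "\<forall>r \<in> set rs. 1 \<le> r \<and> r \<le> L" and "\<forall>s \<in> set ss. 1 \<le> s \<and> s \<le> L"
    and "\<not> dyck_word (map bracket_of C)"
  shows "vac_expect Nocc (inserted_chain C K rs ss) = 0"
proof (rule ccontr)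
  assume nonzero: "vac_expect Nocc (inserted_chain C K rs ss) \<noteq> 0"
  have "n_open (map bracket_of C) = n_close (map bracket_of C)"
    using assms(4,5) by (simp add: n_open_def n_close_def filter_map comp_def bracket_of_eq_not_is_exc)
  then obtain k where "n_open (take k (map bracket_of C)) < n_close (take k (map bracket_of C))"
    and "n_close (drop k (map bracket_of C)) < n_open (drop k (map bracket_of C))"
    using assms(12) by (rule balanced_not_dyck_prefix)
  moreover have "\<forall>e \<in> set (take k C). exop_valid L Nocc e" "\<forall>e \<in> set (drop k C). exop_valid L Nocc e"
    using assms(3) by (auto dest: in_set_takeD in_set_dropD)
  ultimately have "0 < chain_shift Nocc (concat (map exop_ladders (take k C)))"
    and "chain_shift Nocc (concat (map exop_ladders (drop k C))) < 0"
    by (simp_all add: chain_shift_exops take_map drop_map)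
  moreover consider "k \<le> K" | "K \<le> k" by linarith
  ultimately show False
    using nonzero inserted_chain_prefix inserted_chain_suffix vac_expect_nonzero_shifts
    by (metis not_le)
qed

end
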